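(* Let $r>0$, $\kappa>0$, $\tau>0$ and $p\in[0,1]$ be fixed, with $\varepsilon=pe^{-\tau}<1$, and set \[ q_c:=1-\frac{1}{r}\,\frac{1}{1-\varepsilon}. \] For $q\in\mathbb{R}$ let $u(q)=(1-q,0,q)$ and consider the disease-free equilibrium $\widehat{u(q)}$ of the SIQ system, whose eigenvalues are the roots (counted with multiplicity as zeros of an analytic function) of \[ \chi_q(\lambda)=\lambda\Big(\lambda+1-r(1-q)\big(1-\varepsilon e^{-\tau\lambda}\big)\Big). \] If $q\ge q_c$, then $\widehat{u(q)}$ is linearly stable, and if $q<q_c$, then $\widehat{u(q)}$ is linearly unstable. In more detail: for $q\ne q_c$ the eigenvalue $\lambda=0$ has multiplicity $1$ and there is no other eigenvalue on the imaginary axis; for $q\ge q_c$ all nonzero eigenvalues $\lambda$ satisfy $\mathrm{Re}(\lambda)<0$; for $q<q_c$ there is exactly one eigenvalue $\lambda_1$ with $\mathrm{Re}(\lambda_1)>0$.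
   Context: The SIQ system is \[ \dot S(t)=-rS(t)I(t)+I(t)+r\varepsilon S(t-\tau-\kappa)I(t-\tau-\kappa),\quad \dot I(t)=rS(t)I(t)-I(t)-r\varepsilon S(t-\tau)I(t-\tau), \] \[ \dot Q(t)=r\varepsilon\big[S(t-\tau)I(t-\tau)-S(t-\tau-\kappa)I(t-\tau-\kappa)\big], \] with $\varepsilon=pe^{-\tau}$, considered on continuous histories on $[-\tau-\kappa,0]$ with $S+I+Q\equiv1$. For $u\in\mathbb{R}^3$, $\hat u$ is the constant function with value $u$. The function $\chi_q$ is the characteristic function of the linearization at $\widehat{u(q)}$. An equilibrium on this line of equilibria is called linearly stable if all eigenvalues other than $\lambda=0$ have negative real part, and linearly unstable if some eigenvalue has positive real part. *)

theory Defs
  imports "HOL-Complex_Analysis.Complex_Analysis"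
begin

definition siq_eps :: "real \<Rightarrow> real \<Rightarrow> real" where
  "siq_eps p \<tau> = p * exp (- \<tau>)"

definition siq_qc :: "real \<Rightarrow> real \<Rightarrow> real \<Rightarrow> real" where
  "siq_qc r p \<tau> = 1 - (1 / r) * (1 / (1 - siq_eps p \<tau>))"

definition siq_chi :: "real \<Rightarrow> real \<Rightarrow> real \<Rightarrow> real \<Rightarrow> complex \<Rightarrow> complex" where
  "siq_chi r p \<tau> q lam =
     lam * (lam + 1 - of_real (r * (1 - q)) *
           (1 - of_real (siq_eps p \<tau>) * exp (- of_real \<tau> * lam)))"

definition lin_stable :: "(complex \<Rightarrow> complex) \<Rightarrow> bool" where
  "lin_stable chi \<longleftrightarrow> (\<forall>lam. chi lam = 0 \<and> lam \<noteq> 0 \<longrightarrow> Re lam < 0)"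

definition lin_unstable :: "(complex \<Rightarrow> complex) \<Rightarrow> bool" where
  "lin_unstable chi \<longleftrightarrow> (\<exists>lam. chi lam = 0 \<and> Re lam > 0)"

end

theory Submission
  imports Defs
begin

text \<open>With \<open>a = r (1 - q)\<close> the characteristic function is \<open>\<chi>\<^sub>q(z) = z g(z)\<close>, where
  \<open>g(z) = z - A + B exp(-\<tau> z)\<close>, \<open>A = a - 1\<close>, \<open>B = a \<epsilon>\<close>; moreover \<open>q \<ge> q\<^sub>c\<close> iff \<open>A \<le> B\<close>, and
  \<open>g(0) = B - A\<close>.  Taking imaginary parts and using \<open>|sin y| \<le> |y|\<close>, a non-real zero of \<open>g\<close>
  with real part \<open>x\<close> satisfies \<open>|B| \<tau> exp(-\<tau> x) \<ge> 1\<close>, while taking moduli gives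
  \<open>|x - A| \<le> |B| exp(-\<tau> x)\<close>.  If \<open>A < B \<le> 0\<close> the latter forces \<open>x < 0\<close>.  If \<open>A \<le> B\<close> and
  \<open>B \<ge> 0\<close>, then \<open>B \<tau> < 1\<close> because \<open>\<epsilon> (1 + \<tau>) < 1\<close>, which excludes non-real zeros with
  \<open>x \<ge> 0\<close>, and \<open>exp(-\<tau> x) \<ge> 1 - \<tau> x\<close> excludes real zeros \<open>x > 0\<close>.  If \<open>0 \<le> B < A\<close>, then
  \<open>exp(\<tau> x) \<ge> 1 + \<tau> x\<close> shows that every zero in the closed right half plane is real; the real
  function \<open>x - A + B exp(-\<tau> x)\<close> is convex and negative at \<open>0\<close>, so it has exactly one positive
  zero, and the same inequality shows that this zero is simple.\<close>

text \<open>Characteristic function of the scalar delay equation \<open>x'(t) = A x(t) - B x(t - \<tau>)\<close>.\<close>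
definition dde_char :: "real \<Rightarrow> real \<Rightarrow> real \<Rightarrow> complex \<Rightarrow> complex" where
  "dde_char A B \<tau> z = z - of_real A + of_real B * exp (- of_real \<tau> * z)"

lemma dde_char_of_real:
  "dde_char A B \<tau> (of_real x) = of_real (x - A + B * exp (- \<tau> * x))"
  by (simp add: dde_char_def flip: exp_of_real)

lemma dde_char_0: "dde_char A B \<tau> 0 = of_real (B - A)"
  by (simp add: dde_char_def)

lemma dde_char_has_field_derivative:
  "(dde_char A B \<tau> has_field_derivative 1 - of_real (B * \<tau>) * exp (- of_real \<tau> * z)) (at z)"
  unfolding dde_char_def by (rule derivative_eq_intros refl | simp)+

lemma holomorphic_dde_char: "dde_char A B \<tau> holomorphic_on S"
  unfolding dde_char_def by (intro holomorphic_intros)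

lemma dde_char_eq_0_iff:
  "dde_char A B \<tau> z = 0 \<longleftrightarrow>
     Re z - A + B * exp (- \<tau> * Re z) * cos (\<tau> * Im z) = 0 \<and>
     Im z = B * exp (- \<tau> * Re z) * sin (\<tau> * Im z)"
  by (auto simp: complex_eq_iff dde_char_def Re_exp Im_exp)

lemma dde_char_root_Re_bound:
  assumes "dde_char A B \<tau> z = 0"
  shows "\<bar>Re z - A\<bar> \<le> \<bar>B\<bar> * exp (- \<tau> * Re z)"
proof -
  have "z - of_real A = - (of_real B * exp (- of_real \<tau> * z))"
    using assms by (simp add: dde_char_def algebra_simps)
  then have "cmod (z - of_real A) = \<bar>B\<bar> * exp (- \<tau> * Re z)"
    by (simp add: norm_mult)
  then show ?thesis
    using abs_Re_le_cmod[of "z - of_real A"] by simp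
qed

lemma dde_char_nonreal_root:
  assumes "\<tau> \<ge> 0" "dde_char A B \<tau> z = 0" "Im z \<noteq> 0"
  shows "1 \<le> \<bar>B\<bar> * \<tau> * exp (- \<tau> * Re z)"
proof -
  define w where "w = \<bar>B\<bar> * exp (- \<tau> * Re z)"
  have "Im z = B * exp (- \<tau> * Re z) * sin (\<tau> * Im z)"
    using assms(2) by (simp add: dde_char_eq_0_iff)
  then have "\<bar>Im z\<bar> = w * \<bar>sin (\<tau> * Im z)\<bar>"
    unfolding w_def by (metis abs_mult abs_exp_cancel)
  also have "\<dots> \<le> w * (\<tau> * \<bar>Im z\<bar>)"
    using abs_sin_x_le_abs_x[of "\<tau> * Im z"] assms(1)
    by (intro mult_left_mono) (auto simp: w_def abs_mult)
  finally have "1 * \<bar>Im z\<bar> \<le> (w * \<tau>) * \<bar>Im z\<bar>" by simp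
  then have "1 \<le> w * \<tau>"
    using assms(3) by (simp add: mult_le_cancel_right)
  then show ?thesis by (simp add: w_def mult_ac)
qed

lemma dde_char_root_Re_neg:
  assumes "\<tau> \<ge> 0" "A + \<bar>B\<bar> < 0" "dde_char A B \<tau> z = 0"
  shows "Re z < 0"
proof (rule ccontr)
  assume "\<not> Re z < 0"
  then have "\<bar>B\<bar> * exp (- \<tau> * Re z) \<le> \<bar>B\<bar>"
    using assms(1) by (intro mult_left_le) auto
  then show False
    using dde_char_root_Re_bound[OF assms(3)] assms(2) \<open>\<not> Re z < 0\<close> by linarith
qed

lemma dde_char_root_Re_nonneg_eq_0:
  assumes "\<tau> \<ge> 0" "B \<ge> 0" "B * \<tau> < 1" "A \<le> B"
    and "dde_char A B \<tau> z = 0" "Re z \<ge> 0"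
  shows "z = 0"
proof -
  define x where "x = Re z"
  have "exp (- \<tau> * x) \<le> 1"
    using assms(1,6) by (simp add: x_def)
  then have "B * \<tau> * exp (- \<tau> * x) \<le> B * \<tau>"
    using assms(1,2) by (intro mult_left_le) auto
  then have "Im z = 0"
    using dde_char_nonreal_root[OF assms(1,5)] assms(2,3) by (force simp: x_def)
  then have z: "z = of_real x" by (simp add: complex_eq_iff x_def)
  then have "x - A + B * exp (- \<tau> * x) = 0"
    using assms(5) dde_char_of_real by (metis of_real_eq_0_iff)
  moreover have "B * (1 - \<tau> * x) \<le> B * exp (- \<tau> * x)"
    using exp_ge_add_one_self[of "- \<tau> * x"] assms(2) by (intro mult_left_mono) auto
  ultimately have "x * (1 - B * \<tau>) \<le> 0"
    using assms(4) by (simp add: algebra_simps)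
  then have "x = 0"
    using assms(3,6) by (simp add: x_def mult_le_0_iff)
  then show ?thesis using z by simp
qed

text \<open>The shape \<open>A \<le> x + B e\<^sup>-\<^sup>\<tau>\<^sup>x\<close> covers both real roots and real parts of
  complex roots (via \<open>dde_char_root_Re_bound\<close>).\<close>
lemma dde_real_root_slope_lt_1:
  fixes A B \<tau> x :: real
  assumes "0 \<le> B" "B < A" "x \<ge> 0" "A \<le> x + B * exp (- \<tau> * x)"
  shows "B * \<tau> * exp (- \<tau> * x) < 1"
proof (rule ccontr)
  define w where "w = B * exp (- \<tau> * x)"
  assume "\<not> B * \<tau> * exp (- \<tau> * x) < 1"
  then have "x \<le> w * \<tau> * x"
    using assms(3) mult_right_mono[of 1 "w * \<tau>" x] by (simp add: w_def algebra_simps)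
  moreover have "w * (1 + \<tau> * x) \<le> w * exp (\<tau> * x)"
    using assms(1) by (intro mult_left_mono) (auto simp: w_def)
  then have "w * (1 + \<tau> * x) \<le> B"
    by (simp add: w_def mult.assoc flip: exp_add)
  ultimately show False
    using assms(2,4) by (simp add: w_def algebra_simps)
qed

lemma dde_char_root_real:
  assumes "\<tau> \<ge> 0" "0 \<le> B" "B < A" "dde_char A B \<tau> z = 0" "Re z \<ge> 0"
  shows "Im z = 0"
proof (rule ccontr)
  assume "Im z \<noteq> 0"
  then have "1 \<le> B * \<tau> * exp (- \<tau> * Re z)"
    using dde_char_nonreal_root[OF assms(1,4)] assms(2) by simp
  moreover have "A \<le> Re z + B * exp (- \<tau> * Re z)"
    using dde_char_root_Re_bound[OF assms(4)] assms(2) by simp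
  ultimately show False
    using dde_real_root_slope_lt_1[OF assms(2,3,5), where \<tau> = \<tau>] by simp
qed

lemma dde_real_root_exists:
  fixes A B \<tau> :: real
  assumes "0 \<le> B" "B < A"
  shows "\<exists>x>0. x - A + B * exp (- \<tau> * x) = 0"
proof -
  let ?f = "\<lambda>x. x - A + B * exp (- \<tau> * x)"
  have "\<forall>x. 0 \<le> x \<and> x \<le> A \<longrightarrow> isCont ?f x" by (auto intro!: continuous_intros)
  moreover have "?f 0 \<le> 0" "0 \<le> ?f A" "0 \<le> A" using assms by auto
  ultimately obtain x where "0 \<le> x" "?f x = 0"
    using IVT[of ?f 0 0 A] by blast
  moreover have "x \<noteq> 0" using \<open>?f x = 0\<close> assms by auto
  ultimately show ?thesis by (metis order_le_neq_trans)
qed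

lemma dde_real_root_unique:
  fixes A B \<tau> x1 x2 :: real
  assumes "0 \<le> B" "B < A" "x1 > 0" "x2 > 0"
    and "x1 - A + B * exp (- \<tau> * x1) = 0" "x2 - A + B * exp (- \<tau> * x2) = 0"
  shows "x1 = x2"
proof -
  have False if "0 < u" "u < v"
    and u: "u - A + B * exp (- \<tau> * u) = 0" and v: "v - A + B * exp (- \<tau> * v) = 0" for u v
  proof -
    define t where "t = u / v"
    have t: "0 < t" "t < 1" "u = t * v" using that(1,2) by (auto simp: t_def)
    have "exp (- \<tau> * u) \<le> (1 - t) * exp 0 + t * exp (- \<tau> * v)"
      using convex_onD[OF exp_convex, of t 0 "- \<tau> * v"] t by (simp add: algebra_simps)
    then have "B * exp (- \<tau> * u) \<le> B * ((1 - t) + t * exp (- \<tau> * v))"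
      using assms(1) by (simp add: mult_left_mono)
    then have "0 \<le> t * (v - A + B * exp (- \<tau> * v)) + (1 - t) * (B - A)"
      using u t(3) by (simp add: algebra_simps)
    moreover have "(1 - t) * (B - A) < 0" using t assms(2) by (simp add: mult_pos_neg)
    ultimately show False using v by simp
  qed
  then show ?thesis using assms(3-6) by (metis linorder_neqE_linordered_idom)
qed

lemma zorder_eq_1I:
  assumes "f holomorphic_on S" "open S" "z \<in> S" "f z = 0" "deriv f z \<noteq> 0"
  shows "zorder f z = 1"
  using zorder_zero_eqI[OF assms(1-3), of 1] assms(4,5) by simp

lemma zorder_mult_id_dde_char_root:
  assumes "w \<noteq> 0" "dde_char A B \<tau> w = 0" "1 - of_real (B * \<tau>) * exp (- of_real \<tau> * w) \<noteq> 0"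
  shows "zorder (\<lambda>z. z * dde_char A B \<tau> z) w = 1"
proof (rule zorder_eq_1I[OF _ open_UNIV UNIV_I])
  have "((\<lambda>z. z * dde_char A B \<tau> z) has_field_derivative
          w * (1 - of_real (B * \<tau>) * exp (- of_real \<tau> * w))) (at w)"
    using DERIV_mult[OF DERIV_ident dde_char_has_field_derivative[of A B \<tau> w]] assms(2)
    by (simp add: algebra_simps)
  then show "deriv (\<lambda>z. z * dde_char A B \<tau> z) w \<noteq> 0"
    using DERIV_imp_deriv assms(1,3) by fastforce
qed (auto intro!: holomorphic_intros holomorphic_dde_char simp: assms(2))

lemma dde_char_unstable_root:
  assumes "\<tau> \<ge> 0" "0 \<le> B" "B < A"
  obtains x where "x > 0" "dde_char A B \<tau> (of_real x) = 0"
    "zorder (\<lambda>z. z * dde_char A B \<tau> z) (of_real x) = 1"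
    "\<And>z. dde_char A B \<tau> z = 0 \<Longrightarrow> Re z \<ge> 0 \<Longrightarrow> z = of_real x"
proof -
  obtain x where x: "x > 0" "x - A + B * exp (- \<tau> * x) = 0"
    using dde_real_root_exists[OF assms(2,3)] by blast
  have root: "dde_char A B \<tau> (of_real x) = 0"
    unfolding dde_char_of_real x(2) by simp
  have "z = of_real x" if z: "dde_char A B \<tau> z = 0" "Re z \<ge> 0" for z
  proof -
    have "Im z = 0" using dde_char_root_real[OF assms z] .
    then have z_eq: "z = of_real (Re z)" by (simp add: complex_eq_iff)
    then have "Re z - A + B * exp (- \<tau> * Re z) = 0"
      using z(1) dde_char_of_real by (metis of_real_eq_0_iff)
    moreover have "Re z \<noteq> 0" using z(1) z_eq assms(3) by (auto simp: dde_char_def)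
    ultimately have "Re z = x"
      using dde_real_root_unique[OF assms(2,3) _ x(1) _ x(2)] z(2) by simp
    then show ?thesis using z_eq by simp
  qed
  moreover have "zorder (\<lambda>z. z * dde_char A B \<tau> z) (of_real x) = 1"
  proof (rule zorder_mult_id_dde_char_root[OF _ root])
    have "B * \<tau> * exp (- \<tau> * x) < 1"
      using dde_real_root_slope_lt_1[OF assms(2,3)] x by simp
    moreover have "1 - of_real (B * \<tau>) * exp (- of_real \<tau> * of_real x)
        = (of_real (1 - B * \<tau> * exp (- \<tau> * x)) :: complex)"
      by (simp flip: exp_of_real)
    ultimately show "1 - of_real (B * \<tau>) * exp (- of_real \<tau> * of_real x) \<noteq> (0::complex)"
      by (metis less_irrefl of_real_eq_0_iff right_minus_eq)
  qed (use x(1) in simp)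
  ultimately show ?thesis using that x(1) root by blast
qed

lemma siq_chi_eq:
  "siq_chi r p \<tau> q = (\<lambda>z. z * dde_char (r * (1 - q) - 1) (r * (1 - q) * siq_eps p \<tau>) \<tau> z)"
  by (auto simp: siq_chi_def dde_char_def algebra_simps)

lemma siq_qc_le_iff:
  assumes "r > 0" "siq_eps p \<tau> < 1"
  shows "siq_qc r p \<tau> \<le> q \<longleftrightarrow> r * (1 - q) * (1 - siq_eps p \<tau>) \<le> 1"
proof -
  have "siq_qc r p \<tau> \<le> q \<longleftrightarrow> 1 - q \<le> 1 / (r * (1 - siq_eps p \<tau>))"
    by (simp add: siq_qc_def) linarith
  also have "\<dots> \<longleftrightarrow> r * (1 - q) * (1 - siq_eps p \<tau>) \<le> 1"
    using assms by (simp add: le_divide_eq algebra_simps)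
  finally show ?thesis .
qed

lemma siq_qc_eq_iff:
  assumes "r > 0" "siq_eps p \<tau> < 1"
  shows "q = siq_qc r p \<tau> \<longleftrightarrow> r * (1 - q) * (1 - siq_eps p \<tau>) = 1"
proof -
  have "q = siq_qc r p \<tau> \<longleftrightarrow> 1 - q = 1 / (r * (1 - siq_eps p \<tau>))"
    by (auto simp: siq_qc_def)
  also have "\<dots> \<longleftrightarrow> r * (1 - q) * (1 - siq_eps p \<tau>) = 1"
    using assms by (simp add: eq_divide_eq algebra_simps)
  finally show ?thesis .
qed

lemma siq_eps_nonneg: "0 \<le> p \<Longrightarrow> 0 \<le> siq_eps p \<tau>"
  by (simp add: siq_eps_def)

lemma siq_eps_mult_lt_1:
  assumes "\<tau> > 0" "0 \<le> p" "p \<le> 1"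
  shows "siq_eps p \<tau> * (1 + \<tau>) < 1"
proof -
  have "1 + \<tau> < exp \<tau>"
    using ln_add_one_self_less_self[OF assms(1)] assms(1)
    by (metis add_pos_pos exp_ln exp_less_cancel_iff zero_less_one)
  then have "exp (- \<tau>) * (1 + \<tau>) < 1"
    by (simp add: exp_minus field_simps)
  moreover have "siq_eps p \<tau> \<le> exp (- \<tau>)"
    using assms by (simp add: siq_eps_def mult_left_le_one_le)
  ultimately show ?thesis
    using assms(1) by (smt (verit) mult_right_mono)
qed

lemma siq_chi_stable:
  assumes "r > 0" "\<tau> > 0" "0 \<le> p" "p \<le> 1" "siq_eps p \<tau> < 1" "siq_qc r p \<tau> \<le> q"
    and "siq_chi r p \<tau> q z = 0" "z \<noteq> 0"
  shows "Re z < 0"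
proof -
  define a where "a = r * (1 - q)"
  define \<epsilon> where "\<epsilon> = siq_eps p \<tau>"
  have \<epsilon>: "0 \<le> \<epsilon>" "\<epsilon> < 1" using assms(3,5) siq_eps_nonneg by (auto simp: \<epsilon>_def)
  have crit: "a * (1 - \<epsilon>) \<le> 1"
    using siq_qc_le_iff[OF assms(1,5), of q] assms(6) by (simp add: a_def \<epsilon>_def)
  have root: "dde_char (a - 1) (a * \<epsilon>) \<tau> z = 0"
    using assms(7,8) by (simp add: siq_chi_eq a_def \<epsilon>_def)
  show ?thesis
  proof (cases "a \<le> 0")
    case True
    then have "a * (1 - \<epsilon>) \<le> 0" using \<epsilon> by (simp add: mult_nonpos_nonneg)
    then have "a - 1 + \<bar>a * \<epsilon>\<bar> < 0"
      using True \<epsilon> by (simp add: abs_mult algebra_simps)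
    then show ?thesis using dde_char_root_Re_neg[OF _ _ root] assms(2) by simp
  next
    case False
    have "a \<le> 1 / (1 - \<epsilon>)"
      using crit \<epsilon> by (simp add: le_divide_eq)
    then have "a * (\<epsilon> * \<tau>) \<le> 1 / (1 - \<epsilon>) * (\<epsilon> * \<tau>)"
      using \<epsilon> assms(2) by (intro mult_right_mono) auto
    also have "\<dots> < 1"
      using siq_eps_mult_lt_1[OF assms(2-4)] \<epsilon> by (simp add: \<epsilon>_def field_simps)
    finally have "a * \<epsilon> * \<tau> < 1" by (simp add: mult.assoc)
    moreover have "a - 1 \<le> a * \<epsilon>" using crit by (simp add: algebra_simps)
    ultimately have "\<not> Re z \<ge> 0"
      using dde_char_root_Re_nonneg_eq_0[OF _ _ _ _ root] assms(2,8) False \<epsilon> by force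
    then show ?thesis by simp
  qed
qed

lemma siq_chi_unstable:
  assumes "r > 0" "\<tau> > 0" "0 \<le> p" "siq_eps p \<tau> < 1" "q < siq_qc r p \<tau>"
  obtains lam1 where "siq_chi r p \<tau> q lam1 = 0" "Re lam1 > 0" "zorder (siq_chi r p \<tau> q) lam1 = 1"
    "\<And>\<mu>. siq_chi r p \<tau> q \<mu> = 0 \<Longrightarrow> Re \<mu> \<ge> 0 \<Longrightarrow> \<mu> \<noteq> 0 \<Longrightarrow> \<mu> = lam1"
proof -
  define a where "a = r * (1 - q)"
  define \<epsilon> where "\<epsilon> = siq_eps p \<tau>"
  have chi: "siq_chi r p \<tau> q = (\<lambda>z. z * dde_char (a - 1) (a * \<epsilon>) \<tau> z)"
    by (simp add: siq_chi_eq a_def \<epsilon>_def)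
  have \<epsilon>: "0 \<le> \<epsilon>" "\<epsilon> < 1" using assms(3,4) siq_eps_nonneg by (auto simp: \<epsilon>_def)
  have crit: "1 < a * (1 - \<epsilon>)"
    using siq_qc_le_iff[OF assms(1,4), of q] assms(5) by (simp add: a_def \<epsilon>_def)
  have "0 < a"
  proof (rule ccontr)
    assume "\<not> 0 < a"
    then have "a * (1 - \<epsilon>) \<le> 0" using \<epsilon> by (simp add: mult_nonpos_nonneg)
    with crit show False by simp
  qed
  then have B: "0 \<le> a * \<epsilon>" "a * \<epsilon> < a - 1" using \<epsilon> crit by (simp_all add: algebra_simps)
  have "0 \<le> \<tau>" using assms(2) by simp
  then obtain x where x: "x > 0" "dde_char (a - 1) (a * \<epsilon>) \<tau> (of_real x) = 0"
      "zorder (\<lambda>z. z * dde_char (a - 1) (a * \<epsilon>) \<tau> z) (of_real x) = 1"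
      "\<And>z. dde_char (a - 1) (a * \<epsilon>) \<tau> z = 0 \<Longrightarrow> Re z \<ge> 0 \<Longrightarrow> z = of_real x"
    using dde_char_unstable_root B by blast
  show ?thesis
  proof (rule that[of "of_real x"])
    show "\<mu> = of_real x" if "siq_chi r p \<tau> q \<mu> = 0" "Re \<mu> \<ge> 0" "\<mu> \<noteq> 0" for \<mu>
      using x(4) that by (simp add: chi)
  qed (use x(1-3) in \<open>simp_all add: chi\<close>)
qed

lemma siq_chi_zorder_0:
  assumes "r > 0" "siq_eps p \<tau> < 1" "q \<noteq> siq_qc r p \<tau>"
  shows "zorder (siq_chi r p \<tau> q) 0 = 1"
proof -
  have "r * (1 - q) - 1 \<noteq> r * (1 - q) * siq_eps p \<tau>"
    using siq_qc_eq_iff[OF assms(1,2), of q] assms(3) by (simp add: algebra_simps)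
  then have "dde_char (r * (1 - q) - 1) (r * (1 - q) * siq_eps p \<tau>) \<tau> 0 \<noteq> 0"
    unfolding dde_char_0 of_real_eq_0_iff by simp
  then show ?thesis
    unfolding siq_chi_eq
    by (intro simple_zeroI[OF open_UNIV UNIV_I holomorphic_dde_char]) auto
qed

theorem theorem3:
  fixes r \<kappa> \<tau> p :: real
  assumes "r > 0" and "\<kappa> > 0" and "\<tau> > 0" and "0 \<le> p" and "p \<le> 1"
    and "siq_eps p \<tau> < 1"
  shows "\<forall>q::real.
     (q \<ge> siq_qc r p \<tau> \<longrightarrow> lin_stable (siq_chi r p \<tau> q)) \<and>
     (q < siq_qc r p \<tau> \<longrightarrow> lin_unstable (siq_chi r p \<tau> q)) \<and>
     (q \<noteq> siq_qc r p \<tau> \<longrightarrow>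
        zorder (siq_chi r p \<tau> q) 0 = 1 \<and>
        (\<forall>lam. siq_chi r p \<tau> q lam = 0 \<and> Re lam = 0 \<longrightarrow> lam = 0)) \<and>
     (q \<ge> siq_qc r p \<tau> \<longrightarrow>
        (\<forall>lam. siq_chi r p \<tau> q lam = 0 \<and> lam \<noteq> 0 \<longrightarrow> Re lam < 0)) \<and>
     (q < siq_qc r p \<tau> \<longrightarrow>
        (\<exists>lam1. siq_chi r p \<tau> q lam1 = 0 \<and> Re lam1 > 0 \<and>
               zorder (siq_chi r p \<tau> q) lam1 = 1 \<and>
               (\<forall>\<mu>. siq_chi r p \<tau> q \<mu> = 0 \<and> Re \<mu> > 0 \<longrightarrow> \<mu> = lam1)))"
proof (intro allI, goal_cases)
  case (1 q)
  have zorder_0: "q \<noteq> siq_qc r p \<tau> \<longrightarrow> zorder (siq_chi r p \<tau> q) 0 = 1"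
    using siq_chi_zorder_0[OF assms(1,6)] by blast
  show ?case
  proof (cases "siq_qc r p \<tau> \<le> q")
    case True
    have stable: "\<forall>lam. siq_chi r p \<tau> q lam = 0 \<and> lam \<noteq> 0 \<longrightarrow> Re lam < 0"
      using siq_chi_stable[OF assms(1,3-6) True] by blast
    then have "\<forall>lam. siq_chi r p \<tau> q lam = 0 \<and> Re lam = 0 \<longrightarrow> lam = 0"
      by (metis less_irrefl)
    then show ?thesis
      using True stable zorder_0 unfolding lin_stable_def by (simp add: not_less)
  next
    case False
    then have "q < siq_qc r p \<tau>" by simp
    then show ?thesis
    proof (rule siq_chi_unstable[OF assms(1,3,4,6)])
      fix lam1
      assume lam1: "siq_chi r p \<tau> q lam1 = 0" "Re lam1 > 0" "zorder (siq_chi r p \<tau> q) lam1 = 1"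
        and unique: "\<And>\<mu>. siq_chi r p \<tau> q \<mu> = 0 \<Longrightarrow> Re \<mu> \<ge> 0 \<Longrightarrow> \<mu> \<noteq> 0 \<Longrightarrow> \<mu> = lam1"
      have "lam = 0" if "siq_chi r p \<tau> q lam = 0" "Re lam = 0" for lam
        using unique[OF that(1)] that(2) lam1(2) by fastforce
      moreover have "\<mu> = lam1" if "siq_chi r p \<tau> q \<mu> = 0" "Re \<mu> > 0" for \<mu>
        using unique[OF that(1)] that(2) by fastforce
      ultimately show ?thesis
        using False lam1 zorder_0 unfolding lin_unstable_def by blast
    qed
  qed
qed

end
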